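(* Let $f:\mathbb{R}^d\to\mathbb{R}$ be differentiable with a stochastic gradient oracle $\nabla f(x,\xi)$, and let $(x_t,z_t)_{t\ge0}$ be the continuized Nesterov process (see context) with constant parameters $\eta,\eta',\gamma,\gamma'$ satisfying $\eta+\eta'>0$. Define $\tilde y_k=x_{T_{k+1}^-}$, $\tilde x_k=x_{T_k}$, $\tilde z_k=z_{T_k}$ for $k\ge0$. Then for every $k\ge0$, with $\Delta_k=T_{k+1}-T_k$, $$\tilde y_k=(\tilde z_k-\tilde x_k)\frac{\eta}{\eta+\eta'}\big(1-e^{-(\eta+\eta')\Delta_k}\big)+\tilde x_k,\qquad \tilde x_{k+1}=\tilde y_k-\gamma\nabla f(\tilde y_k,\xi_{k+1}),$$ $$\tilde z_{k+1}=\tilde z_k+\eta'\frac{1-e^{-(\eta+\eta')\Delta_k}}{\eta'+\eta e^{-(\eta+\eta')\Delta_k}}(\tilde y_k-\tilde z_k)-\gamma'\nabla f(\tilde y_k,\xi_{k+1}).$$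
   Context: $(\Xi,\mathcal{P})$ is a probability space and $\nabla f(x,\xi)$ is measurable. Continuized Nesterov process: let $T_0=0$, $T_{k+1}-T_k$ ($k\ge0$) i.i.d. exponential with parameter $1$, and $\xi_1,\xi_2,\dots$ i.i.d. with law $\mathcal{P}$, independent of the $T_k$; $N=\sum_{k\ge1}\delta_{(T_k,\xi_k)}$. The càdlàg process $(x_t,z_t)$ starts at $x_0=z_0$ deterministic and solves $dx_t=\eta(z_t-x_t)dt-\gamma\int_\Xi\nabla f(x_{t^-},\xi)\,dN(t,\xi)$, $dz_t=\eta'(x_t-z_t)dt-\gamma'\int_\Xi\nabla f(x_{t^-},\xi)\,dN(t,\xi)$; i.e. between jump times $\dot x=\eta(z-x)$, $\dot z=\eta'(x-z)$, and at each $T_k$ ($k\ge1$) $x_{T_k}=x_{T_k^-}-\gamma\nabla f(x_{T_k^-},\xi_k)$, $z_{T_k}=z_{T_k^-}-\gamma'\nabla f(x_{T_k^-},\xi_k)$. Here $x_{T^-}$ denotes the left limit of $x$ at $T$. *)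

theory Defs
  imports "HOL-Analysis.Analysis"
begin

definition left_lim :: "(real \<Rightarrow> 'b::t2_space) \<Rightarrow> real \<Rightarrow> 'b" where
  "left_lim x t = Lim (at_left t) x"

end

theory Submission
  imports Defs
begin

text \<open>Between two jump times the pair (x, z) solves the linear system
  x' = \<eta> (z - x), z' = \<eta>' (x - z). Its two first integrals are the weighted mean
  \<eta>' x + \<eta> z, which is conserved, and the gap z - x, which decays like
  exp (-(\<eta> + \<eta>') t). Together they give x and z in closed form on each open interval
  (T k, T (k+1)); the closed forms extend continuously to the right endpoint, which identifies
  the left limits there, and the jump rule does the rest. The update of z is obtained by
  eliminating x (T k) - z (T k) between the two closed forms.\<close>

lemma has_vector_derivative_zero_imp_eq_left_endpoint:
  fixes \<phi> :: "real \<Rightarrow> 'v::real_normed_vector"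
  assumes deriv: "\<And>t. a < t \<Longrightarrow> t < b \<Longrightarrow> (\<phi> has_vector_derivative 0) (at t)"
    and cont: "continuous (at_right a) \<phi>"
    and t: "a < t" "t < b"
  shows "\<phi> t = \<phi> a"
proof -
  obtain c where c: "\<And>u. u \<in> {a<..<b} \<Longrightarrow> \<phi> u = c"
    by (rule has_vector_derivative_zero_constant[of "{a<..<b}" \<phi>])
       (auto intro: has_vector_derivative_at_within deriv)
  have "eventually (\<lambda>u. \<phi> u = c) (at_right a)"
    using t c by (auto simp: eventually_at_right_field intro!: exI[of _ b])
  then have "(\<phi> \<longlongrightarrow> c) (at_right a)"
    by (rule tendsto_eventually)
  moreover have "(\<phi> \<longlongrightarrow> \<phi> a) (at_right a)"
    using cont by (simp add: continuous_within)
  ultimately have "\<phi> a = c"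
    using tendsto_unique trivial_limit_at_right_real by blast
  with c t show ?thesis by simp
qed

lemma left_lim_eqI:
  fixes x F :: "real \<Rightarrow> 'b::t2_space"
  assumes "a < b"
    and eq: "\<And>t. a < t \<Longrightarrow> t < b \<Longrightarrow> x t = F t"
    and "continuous (at_left b) F"
  shows "left_lim x b = F b"
proof -
  have "eventually (\<lambda>t. x t = F t) (at_left b)"
    using \<open>a < b\<close> eq by (auto simp: eventually_at_left_field intro!: exI[of _ a])
  moreover have "(F \<longlongrightarrow> F b) (at_left b)"
    using \<open>continuous (at_left b) F\<close> by (simp add: continuous_within)
  ultimately have "(x \<longlongrightarrow> F b) (at_left b)"
    by (rule tendsto_cong[THEN iffD2])
  then show ?thesis
    unfolding left_lim_def by (intro tendsto_Lim) auto
qed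

context
  fixes x z :: "real \<Rightarrow> 'v::real_normed_vector" and a b \<eta> \<eta>' :: real
  assumes x_ode: "\<And>t. a < t \<Longrightarrow> t < b \<Longrightarrow> (x has_vector_derivative \<eta> *\<^sub>R (z t - x t)) (at t)"
    and z_ode: "\<And>t. a < t \<Longrightarrow> t < b \<Longrightarrow> (z has_vector_derivative \<eta>' *\<^sub>R (x t - z t)) (at t)"
    and x_cont: "continuous (at_right a) x"
    and z_cont: "continuous (at_right a) z"
begin

lemma coupled_ode_weighted_mean_const:
  assumes "a < t" "t < b"
  shows "\<eta>' *\<^sub>R x t + \<eta> *\<^sub>R z t = \<eta>' *\<^sub>R x a + \<eta> *\<^sub>R z a"
proof (rule has_vector_derivative_zero_imp_eq_left_endpoint[OF _ _ assms])
  fix u assume "a < u" "u < b"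
  then show "((\<lambda>u. \<eta>' *\<^sub>R x u + \<eta> *\<^sub>R z u) has_vector_derivative 0) (at u)"
    by (auto intro!: derivative_eq_intros x_ode z_ode simp: algebra_simps)
qed (intro continuous_intros x_cont z_cont)

lemma coupled_ode_gap_decay:
  assumes "a < t" "t < b"
  shows "z t - x t = exp (- (\<eta> + \<eta>') * (t - a)) *\<^sub>R (z a - x a)"
proof -
  define \<tau> where "\<tau> = (\<eta> + \<eta>') * (t - a)"
  have "exp ((\<eta> + \<eta>') * (t - a)) *\<^sub>R (z t - x t) = exp ((\<eta> + \<eta>') * (a - a)) *\<^sub>R (z a - x a)"
  proof (rule has_vector_derivative_zero_imp_eq_left_endpoint[OF _ _ assms])
    fix u assume "a < u" "u < b"
    then show "((\<lambda>u. exp ((\<eta> + \<eta>') * (u - a)) *\<^sub>R (z u - x u)) has_vector_derivative 0) (at u)"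
      by (auto intro!: derivative_eq_intros x_ode z_ode simp: algebra_simps)
  qed (intro continuous_intros x_cont z_cont)
  then have invariant: "exp \<tau> *\<^sub>R (z t - x t) = z a - x a"
    by (simp add: \<tau>_def)
  have "z t - x t = (exp (- \<tau>) * exp \<tau>) *\<^sub>R (z t - x t)"
    by (simp add: exp_minus_inverse mult.commute)
  also have "\<dots> = exp (- \<tau>) *\<^sub>R (z a - x a)"
    by (simp flip: invariant)
  finally show ?thesis
    by (simp add: \<tau>_def algebra_simps)
qed

lemma coupled_ode_closed_form_x:
  assumes "\<eta> + \<eta>' \<noteq> 0" "a < t" "t < b"
  shows "x t = x a + (\<eta> / (\<eta> + \<eta>') * (1 - exp (- (\<eta> + \<eta>') * (t - a)))) *\<^sub>R (z a - x a)"
proof -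
  define s e where "s = \<eta> + \<eta>'" and "e = exp (- (\<eta> + \<eta>') * (t - a))"
  have "s *\<^sub>R x t = (\<eta>' *\<^sub>R x t + \<eta> *\<^sub>R z t) - \<eta> *\<^sub>R (z t - x t)"
    by (simp add: s_def algebra_simps)
  also have "\<dots> = s *\<^sub>R x a + (\<eta> * (1 - e)) *\<^sub>R (z a - x a)"
    unfolding coupled_ode_weighted_mean_const[OF assms(2,3)]
      coupled_ode_gap_decay[OF assms(2,3)] e_def[symmetric]
    by (simp add: s_def algebra_simps)
  also have "\<dots> = s *\<^sub>R (x a + (\<eta> / s * (1 - e)) *\<^sub>R (z a - x a))"
    using assms(1) by (simp add: s_def scaleR_add_right)
  finally show ?thesis
    using assms(1) by (simp add: s_def e_def)
qed

end

lemma coupled_ode_left_lims: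
  fixes x z :: "real \<Rightarrow> 'v::real_normed_vector"
  assumes x_ode: "\<And>t. a < t \<Longrightarrow> t < b \<Longrightarrow> (x has_vector_derivative \<eta> *\<^sub>R (z t - x t)) (at t)"
    and z_ode: "\<And>t. a < t \<Longrightarrow> t < b \<Longrightarrow> (z has_vector_derivative \<eta>' *\<^sub>R (x t - z t)) (at t)"
    and x_cont: "continuous (at_right a) x"
    and z_cont: "continuous (at_right a) z"
    and "a < b" and s: "\<eta> + \<eta>' \<noteq> 0"
  defines "e \<equiv> exp (- (\<eta> + \<eta>') * (b - a))"
  shows "left_lim x b = (\<eta> / (\<eta> + \<eta>') * (1 - e)) *\<^sub>R (z a - x a) + x a"
    and "\<eta>' + \<eta> * e \<noteq> 0 \<Longrightarrow>
      left_lim z b = z a + (\<eta>' * (1 - e) / (\<eta>' + \<eta> * e)) *\<^sub>R (left_lim x b - z a)"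
proof -
  have x_closed_form:
    "x t = x a + (\<eta> / (\<eta> + \<eta>') * (1 - exp (- (\<eta> + \<eta>') * (t - a)))) *\<^sub>R (z a - x a)"
    if "a < t" "t < b" for t
    using coupled_ode_closed_form_x[OF x_ode z_ode x_cont z_cont s that] .
  have "left_lim x b = x a + (\<eta> / (\<eta> + \<eta>') * (1 - e)) *\<^sub>R (z a - x a)"
    unfolding e_def by (rule left_lim_eqI[OF \<open>a < b\<close> x_closed_form])
      (auto intro!: continuous_intros simp: s)
  then show x_lim: "left_lim x b = (\<eta> / (\<eta> + \<eta>') * (1 - e)) *\<^sub>R (z a - x a) + x a"
    by simp
  \<comment> \<open>The system is invariant under swapping (x, \<eta>) with (z, \<eta>').\<close>
  have z_closed_form:
    "z t = z a + (\<eta>' / (\<eta> + \<eta>') * (1 - exp (- (\<eta> + \<eta>') * (t - a)))) *\<^sub>R (x a - z a)"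
    if "a < t" "t < b" for t
    using coupled_ode_closed_form_x[OF z_ode x_ode z_cont x_cont _ that] s
    by (simp add: add.commute)
  have z_lim: "left_lim z b = z a + (\<eta>' / (\<eta> + \<eta>') * (1 - e)) *\<^sub>R (x a - z a)"
    unfolding e_def by (rule left_lim_eqI[OF \<open>a < b\<close> z_closed_form])
      (auto intro!: continuous_intros simp: s)
  assume ne: "\<eta>' + \<eta> * e \<noteq> 0"
  have "left_lim x b - z a = (1 - \<eta> / (\<eta> + \<eta>') * (1 - e)) *\<^sub>R (x a - z a)"
    unfolding x_lim by (simp add: algebra_simps)
  also have "1 - \<eta> / (\<eta> + \<eta>') * (1 - e) = (\<eta>' + \<eta> * e) / (\<eta> + \<eta>')"
    using s by (simp add: field_simps)
  finally have "left_lim x b - z a = ((\<eta>' + \<eta> * e) / (\<eta> + \<eta>')) *\<^sub>R (x a - z a)" .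
  then have "(\<eta>' * (1 - e) / (\<eta>' + \<eta> * e)) *\<^sub>R (left_lim x b - z a)
      = (\<eta>' / (\<eta> + \<eta>') * (1 - e)) *\<^sub>R (x a - z a)"
    using ne by simp
  with z_lim show "left_lim z b = z a + (\<eta>' * (1 - e) / (\<eta>' + \<eta> * e)) *\<^sub>R (left_lim x b - z a)"
    by simp
qed

theorem proposition2:
  fixes f :: "real ^ 'd \<Rightarrow> real"
    and g :: "real ^ 'd \<Rightarrow> 'a \<Rightarrow> real ^ 'd"
    and \<eta> \<eta>' \<gamma> \<gamma>' :: real
    and T :: "nat \<Rightarrow> real"
    and \<xi> :: "nat \<Rightarrow> 'a"
    and x z :: "real \<Rightarrow> real ^ 'd"
    and x0 :: "real ^ 'd"
  assumes f_diff: "\<And>u. f differentiable (at u)"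
    and eta_pos: "\<eta> + \<eta>' > 0"
    and T0: "T 0 = 0"
    and T_mono: "\<And>k. T k < T (Suc k)"
    and T_unbounded: "filterlim T at_top sequentially"
    and x_init: "x 0 = x0" and z_init: "z 0 = x0"
    and x_cadlag: "\<And>t. t \<ge> 0 \<Longrightarrow> continuous (at_right t) x"
    and z_cadlag: "\<And>t. t \<ge> 0 \<Longrightarrow> continuous (at_right t) z"
    and x_leftlim: "\<And>t. t > 0 \<Longrightarrow> \<exists>l. (x \<longlongrightarrow> l) (at_left t)"
    and z_leftlim: "\<And>t. t > 0 \<Longrightarrow> \<exists>l. (z \<longlongrightarrow> l) (at_left t)"
    and x_ode: "\<And>k t. T k < t \<Longrightarrow> t < T (Suc k) \<Longrightarrow>
                  (x has_vector_derivative (\<eta> *\<^sub>R (z t - x t))) (at t)"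
    and z_ode: "\<And>k t. T k < t \<Longrightarrow> t < T (Suc k) \<Longrightarrow>
                  (z has_vector_derivative (\<eta>' *\<^sub>R (x t - z t))) (at t)"
    and x_jump: "\<And>k. x (T (Suc k)) = left_lim x (T (Suc k))
                     - \<gamma> *\<^sub>R g (left_lim x (T (Suc k))) (\<xi> (Suc k))"
    and z_jump: "\<And>k. z (T (Suc k)) = left_lim z (T (Suc k))
                     - \<gamma>' *\<^sub>R g (left_lim x (T (Suc k))) (\<xi> (Suc k))"
  shows "\<forall>k. let yk = left_lim x (T (Suc k)); xk = x (T k); zk = z (T k);
                 e = exp (- (\<eta> + \<eta>') * (T (Suc k) - T k))
             in yk = ((\<eta> / (\<eta> + \<eta>')) * (1 - e)) *\<^sub>R (zk - xk) + xk
              \<and> x (T (Suc k)) = yk - \<gamma> *\<^sub>R g yk (\<xi> (Suc k))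
              \<and> (\<eta>' + \<eta> * e \<noteq> 0 \<longrightarrow>
                   z (T (Suc k)) = zk + (\<eta>' * (1 - e) / (\<eta>' + \<eta> * e)) *\<^sub>R (yk - zk)
                                    - \<gamma>' *\<^sub>R g yk (\<xi> (Suc k)))"
proof -
  \<comment> \<open>The left limits are read off the closed forms.\<close>
  have T_nonneg: "0 \<le> T k" for k
    using lift_Suc_mono_le[of T 0 k] T_mono T0 by (simp add: less_imp_le)
  have "\<eta> + \<eta>' \<noteq> 0"
    using eta_pos by simp
  note left_lims = coupled_ode_left_lims[OF x_ode z_ode x_cadlag[OF T_nonneg] z_cadlag[OF T_nonneg]
      T_mono \<open>\<eta> + \<eta>' \<noteq> 0\<close>]
  show ?thesis
    unfolding Let_def using left_lims x_jump z_jump by simp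
qed

end
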